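(* With $F_1=1+5x-8x^2+x^3$, $G_0=1-x+x^2$, $G_1=1-235x+1430x^2-1695x^3+270x^4+229x^5+x^6$ and $\Phi_3(x)=\dfrac{1728x(x-1)F_1^7}{G_0^3G_1^3}$, in a neighborhood of $x=0$ (radical factors equal to $1$ at $x=0$): $${}_3F_2\!\left(-\tfrac1{14},\tfrac{11}{42},\tfrac{25}{42};\tfrac47,\tfrac57;\Phi_3\right)=(1-3x)(1-x)^{3/7}G_0^{-3/14}G_1^{-3/14},$$ $${}_3F_2\!\left(\tfrac3{14},\tfrac{23}{42},\tfrac{37}{42};\tfrac67,\tfrac97;\Phi_3\right)=\left(1-\tfrac{2x}{3}\right)(1-x)^{-2/7}F_1^{-2}G_0^{9/14}G_1^{9/14},$$ $${}_3F_2\!\left(\tfrac5{14},\tfrac{29}{42},\tfrac{43}{42};\tfrac87,\tfrac{10}7;\Phi_3\right)=\left(1+\tfrac{x}{2}\right)(1-x)^{-1/7}F_1^{-3}G_0^{15/14}G_1^{15/14}.$$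
   Context: ${}_3F_2(\alpha_1,\alpha_2,\alpha_3;\beta_1,\beta_2;z)=\sum_{n\ge0}\frac{(\alpha_1)_n(\alpha_2)_n(\alpha_3)_n}{(\beta_1)_n(\beta_2)_n n!}z^n$. *)

theory Defs
  imports "HOL-Analysis.Analysis"
begin

definition hyp3F2 :: "real \<Rightarrow> real \<Rightarrow> real \<Rightarrow> real \<Rightarrow> real \<Rightarrow> real \<Rightarrow> real" where
  "hyp3F2 a1 a2 a3 b1 b2 z =
     (\<Sum>n. pochhammer a1 n * pochhammer a2 n * pochhammer a3 n
            / (pochhammer b1 n * pochhammer b2 n * fact n) * z ^ n)"

definition F1 :: "real \<Rightarrow> real" where "F1 x = 1 + 5*x - 8*x^2 + x^3"
definition G0 :: "real \<Rightarrow> real" where "G0 x = 1 - x + x^2"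
definition G1 :: "real \<Rightarrow> real" where
  "G1 x = 1 - 235*x + 1430*x^2 - 1695*x^3 + 270*x^4 + 229*x^5 + x^6"
definition Phi3 :: "real \<Rightarrow> real" where
  "Phi3 x = 1728 * x * (x - 1) * F1 x ^ 7 / (G0 x ^ 3 * G1 x ^ 3)"

end

theory Submission
  imports Defs "HOL-Complex_Analysis.Laurent_Convergence"
begin

(*
  Both sides are treated as power series in x. With V = Phi3/Phi3', the Euler operator z d/dz
  pulls back along z = Phi3(x) to V d/dx, so H(Phi3(x)), H the 3F2 series, is annihilated by the
  pulled-back hypergeometric operator. Each right-hand side Y is a polynomial times radicals
  P^(k/d), so its logarithmic derivative is rational and u^j Q^(2j-1) (V d/dx)^j Y = p_j Y for
  polynomials p_j; Y is then annihilated by the same operator exactly when one polynomial identity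
  holds, and that identity is checked by computation. The indicial roots at x = 0 are 0, 1 - b1 and
  1 - b2, all below 1, so a power series solution is determined by its constant term, whence
  Y = Y(0) H(Phi3) as formal power series. Both sides are analytic at 0 (H converges at least for
  |z| < 1/64), so they agree as real functions near 0.
*)

section \<open>Integer polynomials as coefficient lists\<close>

(* Polynomial identities are certified
   by evaluating these operations (code_simp); cl_eval transports them to any commutative ring, in
   particular to formal power series. *)
fun cl_add :: "int list \<Rightarrow> int list \<Rightarrow> int list" where
  "cl_add [] ys = ys"
| "cl_add xs [] = xs"
| "cl_add (x # xs) (y # ys) = (x + y) # cl_add xs ys"

definition cl_smult :: "int \<Rightarrow> int list \<Rightarrow> int list" where
  "cl_smult c xs = map ((*) c) xs"

definition cl_diff :: "int list \<Rightarrow> int list \<Rightarrow> int list" where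
  "cl_diff xs ys = cl_add xs (cl_smult (-1) ys)"

fun cl_mult :: "int list \<Rightarrow> int list \<Rightarrow> int list" where
  "cl_mult [] ys = []"
| "cl_mult (x # xs) ys = cl_add (cl_smult x ys) (0 # cl_mult xs ys)"

fun cl_pow :: "int list \<Rightarrow> nat \<Rightarrow> int list" where
  "cl_pow xs 0 = [1]"
| "cl_pow xs (Suc n) = cl_mult xs (cl_pow xs n)"

fun cl_deriv :: "int list \<Rightarrow> int list" where
  "cl_deriv [] = []"
| "cl_deriv (x # xs) = cl_add xs (0 # cl_deriv xs)"

fun cl_nth :: "int list \<Rightarrow> nat \<Rightarrow> int" where
  "cl_nth [] n = 0"
| "cl_nth (x # xs) 0 = x"
| "cl_nth (x # xs) (Suc n) = cl_nth xs n"

fun cl_is_zero :: "int list \<Rightarrow> bool" where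
  "cl_is_zero [] = True"
| "cl_is_zero (x # xs) = (x = 0 \<and> cl_is_zero xs)"

fun cl_eval :: "int list \<Rightarrow> 'a::comm_ring_1 \<Rightarrow> 'a" where
  "cl_eval [] z = 0"
| "cl_eval (x # xs) z = of_int x + z * cl_eval xs z"

lemma cl_eval_add [simp]: "cl_eval (cl_add xs ys) z = cl_eval xs z + cl_eval ys z"
  by (induction xs ys rule: cl_add.induct) (auto simp: algebra_simps)

lemma cl_eval_smult [simp]: "cl_eval (cl_smult c xs) z = of_int c * cl_eval xs z"
  by (induction xs) (auto simp: cl_smult_def algebra_simps)

lemma cl_eval_diff [simp]: "cl_eval (cl_diff xs ys) z = cl_eval xs z - cl_eval ys z"
  by (simp add: cl_diff_def)

lemma cl_eval_mult [simp]: "cl_eval (cl_mult xs ys) z = cl_eval xs z * cl_eval ys z"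
  by (induction xs) (auto simp: algebra_simps)

lemma cl_eval_pow [simp]: "cl_eval (cl_pow xs n) z = cl_eval xs z ^ n"
  by (induction n) auto

lemma cl_eval_eq_0: "cl_is_zero xs \<Longrightarrow> cl_eval xs z = 0"
  by (induction xs) auto

lemma cl_eval_at_0: "cl_eval xs 0 = of_int (cl_nth xs 0)"
  by (cases xs) auto

lemma cl_eval_of_real: "cl_eval xs (of_real x) = of_real (cl_eval xs x)"
  by (induction xs) auto

lemma continuous_cl_eval [continuous_intros]:
  "continuous_on UNIV (cl_eval xs :: 'a::{real_normed_algebra_1, comm_ring_1} \<Rightarrow> 'a)"
  by (induction xs) (auto intro!: continuous_intros)

lemma fps_nth_cl_eval: "cl_eval xs fps_X $ n = of_int (cl_nth xs n)"
  by (induction xs n rule: cl_nth.induct) auto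

lemma fps_deriv_cl_eval: "fps_deriv (cl_eval xs fps_X) = cl_eval (cl_deriv xs) fps_X"
  by (induction xs) (auto simp: algebra_simps)

abbreviation cl_fps :: "int list \<Rightarrow> complex fps" where
  "cl_fps xs \<equiv> cl_eval xs fps_X"

lemma has_fps_expansion_cl_eval: "(cl_eval xs :: complex \<Rightarrow> complex) has_fps_expansion cl_fps xs"
  by (induction xs) (auto intro!: fps_expansion_intros simp: fps_of_int[symmetric])

section \<open>The hypergeometric series as a formal power series\<close>

definition hyp3F2_coeff :: "real \<Rightarrow> real \<Rightarrow> real \<Rightarrow> real \<Rightarrow> real \<Rightarrow> nat \<Rightarrow> real" where
  "hyp3F2_coeff a1 a2 a3 b1 b2 n =
     pochhammer a1 n * pochhammer a2 n * pochhammer a3 n / (pochhammer b1 n * pochhammer b2 n * fact n)"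

definition hyp3F2_fps :: "real \<Rightarrow> real \<Rightarrow> real \<Rightarrow> real \<Rightarrow> real \<Rightarrow> complex fps" where
  "hyp3F2_fps a1 a2 a3 b1 b2 = Abs_fps (\<lambda>n. of_real (hyp3F2_coeff a1 a2 a3 b1 b2 n))"

lemma hyp3F2_coeff_Suc:
  assumes "b1 > 0" "b2 > 0"
  shows "hyp3F2_coeff a1 a2 a3 b1 b2 (Suc n) * ((b1 + n) * (b2 + n) * (n + 1))
       = hyp3F2_coeff a1 a2 a3 b1 b2 n * ((a1 + n) * (a2 + n) * (a3 + n))"
proof -
  have "pochhammer b1 n > 0" "pochhammer b2 n > 0" "b1 + n > 0" "b2 + n > 0"
    using assms by (auto intro: pochhammer_pos)
  then show ?thesis
    unfolding hyp3F2_coeff_def pochhammer_Suc fact_Suc by (simp add: divide_simps)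
qed

lemma hyp3F2_coeff_Suc_abs_le:
  assumes "\<bar>a1\<bar> \<le> 2" "\<bar>a2\<bar> \<le> 2" "\<bar>a3\<bar> \<le> 2" "b1 \<ge> 1/2" "b2 \<ge> 1/2"
  shows "\<bar>hyp3F2_coeff a1 a2 a3 b1 b2 (Suc n)\<bar> \<le> 32 * \<bar>hyp3F2_coeff a1 a2 a3 b1 b2 n\<bar>"
proof -
  let ?c = "hyp3F2_coeff a1 a2 a3 b1 b2"
  define den where "den = (b1 + n) * (b2 + n) * (n + 1)"
  define num where "num = (a1 + n) * (a2 + n) * (a3 + n)"
  have den_pos: "den > 0"
    unfolding den_def using assms by auto
  have "\<bar>num\<bar> \<le> (real n + 2) * (real n + 2) * (real n + 2)"
    unfolding num_def abs_mult using assms by (intro mult_mono) auto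
  also have "\<dots> \<le> 32 * ((real n + 1/2) * (real n + 1/2) * (real n + 1))"
    by (simp add: field_simps)
  also have "\<dots> \<le> 32 * den"
    unfolding den_def using assms by (intro mult_left_mono mult_mono) auto
  finally have num_le: "\<bar>num\<bar> \<le> 32 * den" .
  have "?c (Suc n) * den = ?c n * num"
    using hyp3F2_coeff_Suc[of b1 b2 a1 a2 a3 n] assms unfolding den_def num_def by simp
  then have "\<bar>?c (Suc n)\<bar> * den = \<bar>?c n\<bar> * \<bar>num\<bar>"
    using den_pos by (metis abs_mult abs_of_pos)
  also have "\<dots> \<le> (32 * \<bar>?c n\<bar>) * den"
    using mult_left_mono[OF num_le, of "\<bar>?c n\<bar>"] by simp
  finally show ?thesis
    using den_pos by simp
qed

lemma fps_conv_radius_hyp3F2_fps: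
  assumes "\<bar>a1\<bar> \<le> 2" "\<bar>a2\<bar> \<le> 2" "\<bar>a3\<bar> \<le> 2" "b1 \<ge> 1/2" "b2 \<ge> 1/2"
  shows "fps_conv_radius (hyp3F2_fps a1 a2 a3 b1 b2) \<ge> ereal (1/64)"
proof -
  let ?c = "hyp3F2_coeff a1 a2 a3 b1 b2"
  have "summable (\<lambda>n. hyp3F2_fps a1 a2 a3 b1 b2 $ n * of_real (1/64) ^ n)"
  proof (rule summable_ratio_test[of "1/2" 0])
    fix n :: nat
    have "norm (hyp3F2_fps a1 a2 a3 b1 b2 $ Suc n * of_real (1/64) ^ Suc n)
        = \<bar>?c (Suc n)\<bar> * (1/64) ^ Suc n"
      by (simp add: hyp3F2_fps_def norm_mult norm_power)
    also have "\<dots> \<le> (32 * \<bar>?c n\<bar>) * (1/64) ^ Suc n"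
      using hyp3F2_coeff_Suc_abs_le[OF assms] by (intro mult_right_mono) auto
    also have "\<dots> = 1/2 * norm (hyp3F2_fps a1 a2 a3 b1 b2 $ n * of_real (1/64) ^ n)"
      by (simp add: hyp3F2_fps_def norm_mult norm_power)
    finally show "norm (hyp3F2_fps a1 a2 a3 b1 b2 $ Suc n * of_real (1/64) ^ Suc n)
        \<le> 1/2 * norm (hyp3F2_fps a1 a2 a3 b1 b2 $ n * of_real (1/64) ^ n)" .
  qed simp
  then have "conv_radius (fps_nth (hyp3F2_fps a1 a2 a3 b1 b2)) \<ge> norm (of_real (1/64) :: complex)"
    by (rule conv_radius_geI)
  then show ?thesis
    by (simp add: fps_conv_radius_def)
qed

lemma eval_hyp3F2_fps_of_real:
  assumes "ereal \<bar>r\<bar> < fps_conv_radius (hyp3F2_fps a1 a2 a3 b1 b2)"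
  shows "eval_fps (hyp3F2_fps a1 a2 a3 b1 b2) (of_real r) = of_real (hyp3F2 a1 a2 a3 b1 b2 r)"
proof -
  have "(\<lambda>n. hyp3F2_fps a1 a2 a3 b1 b2 $ n * of_real r ^ n) sums eval_fps (hyp3F2_fps a1 a2 a3 b1 b2) (of_real r)"
    using assms by (intro sums_eval_fps) simp
  then have "(\<lambda>n. of_real (hyp3F2_coeff a1 a2 a3 b1 b2 n * r ^ n)) sums eval_fps (hyp3F2_fps a1 a2 a3 b1 b2) (of_real r)"
    by (simp add: hyp3F2_fps_def)
  moreover from this[THEN sums_summable] have "summable (\<lambda>n. hyp3F2_coeff a1 a2 a3 b1 b2 n * r ^ n)"
    by (simp only: summable_of_real_iff)
  then have "(\<lambda>n. hyp3F2_coeff a1 a2 a3 b1 b2 n * r ^ n) sums hyp3F2 a1 a2 a3 b1 b2 r"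
    unfolding hyp3F2_def hyp3F2_coeff_def by (rule summable_sums)
  then have "(\<lambda>n. of_real (hyp3F2_coeff a1 a2 a3 b1 b2 n * r ^ n)) sums (of_real (hyp3F2 a1 a2 a3 b1 b2 r) :: complex)"
    by (simp only: sums_of_real_iff)
  ultimately show ?thesis
    by (rule sums_unique2)
qed

section \<open>The pulled-back hypergeometric operator\<close>

definition vderiv :: "complex fps \<Rightarrow> complex fps \<Rightarrow> complex fps" where
  "vderiv V F = V * fps_deriv F"

(* For V = P = fps_X it is the hypergeometric operator; after the substitution
   z = P, V d/dx plays the role of z d/dz (vderiv_fps_compose). *)
definition hyp3F2_op ::
    "complex fps \<Rightarrow> complex fps \<Rightarrow> real \<Rightarrow> real \<Rightarrow> real \<Rightarrow> real \<Rightarrow> real \<Rightarrow> complex fps \<Rightarrow> complex fps" where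
  "hyp3F2_op V P a1 a2 a3 b1 b2 F =
     vderiv V (vderiv V (vderiv V F)) + fps_const (of_real (b1 + b2 - 2)) * vderiv V (vderiv V F)
       + fps_const (of_real ((b1 - 1) * (b2 - 1))) * vderiv V F
     - P * (vderiv V (vderiv V (vderiv V F)) + fps_const (of_real (a1 + a2 + a3)) * vderiv V (vderiv V F)
       + fps_const (of_real (a1 * a2 + a1 * a3 + a2 * a3)) * vderiv V F
       + fps_const (of_real (a1 * a2 * a3)) * F)"

lemma fps_nth_vderiv_fps_X [simp]: "vderiv fps_X F $ n = of_nat n * F $ n"
  by (simp add: vderiv_def)

lemma hyp3F2_op_hyp3F2_fps:
  assumes "b1 > 0" "b2 > 0"
  shows "hyp3F2_op fps_X fps_X a1 a2 a3 b1 b2 (hyp3F2_fps a1 a2 a3 b1 b2) = 0"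
proof (rule fps_ext)
  fix n
  show "hyp3F2_op fps_X fps_X a1 a2 a3 b1 b2 (hyp3F2_fps a1 a2 a3 b1 b2) $ n = 0 $ n"
  proof (cases n)
    case (Suc m)
    have "complex_of_real (hyp3F2_coeff a1 a2 a3 b1 b2 (Suc m) * ((b1 + m) * (b2 + m) * (m + 1)))
        = of_real (hyp3F2_coeff a1 a2 a3 b1 b2 m * ((a1 + m) * (a2 + m) * (a3 + m)))"
      using hyp3F2_coeff_Suc[OF assms] by simp
    then show ?thesis
      using Suc by (simp add: hyp3F2_op_def hyp3F2_fps_def algebra_simps)
  qed (simp add: hyp3F2_op_def)
qed

lemma vderiv_fps_compose:
  fixes P :: "complex fps"
  assumes "P $ 0 = 0" "vderiv V P = P"
  shows "vderiv V (F oo P) = vderiv fps_X F oo P"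
proof -
  have "vderiv V (F oo P) = (fps_deriv F oo P) * vderiv V P"
    by (simp add: vderiv_def fps_compose_deriv[OF assms(1)] algebra_simps)
  also have "\<dots> = (fps_deriv F oo P) * (fps_X oo P)"
    using assms by simp
  also have "\<dots> = vderiv fps_X F oo P"
    by (simp add: vderiv_def fps_compose_mult_distrib[OF assms(1)] mult.commute)
  finally show ?thesis .
qed

lemma hyp3F2_op_fps_compose:
  fixes P :: "complex fps"
  assumes "P $ 0 = 0" "vderiv V P = P"
  shows "hyp3F2_op V P a1 a2 a3 b1 b2 (F oo P) = hyp3F2_op fps_X fps_X a1 a2 a3 b1 b2 F oo P"
  by (simp add: hyp3F2_op_def vderiv_fps_compose[OF assms] fps_compose_add_distrib
      fps_compose_sub_distrib fps_compose_mult_distrib[OF assms(1)] assms(1))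

lemma hyp3F2_op_linear:
  "hyp3F2_op V P a1 a2 a3 b1 b2 (fps_const c * F - G)
     = fps_const c * hyp3F2_op V P a1 a2 a3 b1 b2 F - hyp3F2_op V P a1 a2 a3 b1 b2 G"
  by (simp add: hyp3F2_op_def vderiv_def algebra_simps)

lemma fps_mult_nth_eq_0:
  fixes P G :: "'a::semiring_0 fps"
  assumes "P $ 0 = 0" "\<forall>j<m. G $ j = 0"
  shows "(P * G) $ m = 0"
proof -
  have "P $ i * G $ (m - i) = 0" if "i \<le> m" for i
    using assms that by (cases "i = 0") auto
  then show ?thesis
    by (simp add: fps_mult_nth)
qed

lemma vderiv_nth_below:
  fixes V F :: "complex fps"
  assumes "V $ 0 = 0" "\<forall>j<m. F $ j = 0" "j < m"
  shows "vderiv V F $ j = 0"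
proof -
  have "V $ i * fps_deriv F $ (j - i) = 0" if "i \<le> j" for i
    using assms that by (cases "i = 0") auto
  then show ?thesis
    unfolding vderiv_def fps_mult_nth by (intro sum.neutral ballI) simp
qed

lemma vderiv_nth:
  fixes V F :: "complex fps"
  assumes "V $ 0 = 0" "V $ 1 = 1" "\<forall>j<m. F $ j = 0"
  shows "vderiv V F $ m = of_nat m * F $ m"
proof (cases m)
  case (Suc k)
  have "V $ i * fps_deriv F $ (m - i) = (if i = 1 then of_nat m * F $ m else 0)" if "i \<le> m" for i
    using assms that Suc by (cases "i = 0") auto
  then have "vderiv V F $ m = (\<Sum>i=0..m. if i = 1 then of_nat m * F $ m else 0)"
    unfolding vderiv_def fps_mult_nth by (intro sum.cong) auto
  then show ?thesis
    using Suc by simp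
qed (use assms in \<open>simp add: vderiv_def\<close>)

lemma hyp3F2_op_nth:
  fixes V P F :: "complex fps"
  assumes "V $ 0 = 0" "V $ 1 = 1" "P $ 0 = 0" "\<forall>j<m. F $ j = 0"
  shows "hyp3F2_op V P a1 a2 a3 b1 b2 F $ m = of_real (m * (m + b1 - 1) * (m + b2 - 1)) * F $ m"
proof -
  let ?D = "vderiv V"
  have low1: "\<forall>j<m. ?D F $ j = 0"
    using vderiv_nth_below[OF assms(1,4)] by blast
  have low2: "\<forall>j<m. ?D (?D F) $ j = 0"
    using vderiv_nth_below[OF assms(1) low1] by blast
  have low3: "\<forall>j<m. ?D (?D (?D F)) $ j = 0"
    using vderiv_nth_below[OF assms(1) low2] by blast
  have "(P * (?D (?D (?D F)) + fps_const (of_real (a1 + a2 + a3)) * ?D (?D F)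
       + fps_const (of_real (a1 * a2 + a1 * a3 + a2 * a3)) * ?D F
       + fps_const (of_real (a1 * a2 * a3)) * F)) $ m = 0"
    using low1 low2 low3 assms(4) by (intro fps_mult_nth_eq_0[OF assms(3)]) simp
  then show ?thesis
    using vderiv_nth[OF assms(1,2)] low1 low2 assms(4)
    by (simp add: hyp3F2_op_def algebra_simps)
qed

(* The indicial roots 0, 1 - b1, 1 - b2 are all below 1. *)
lemma hyp3F2_op_eq_0_imp_eq_0:
  fixes V P F :: "complex fps"
  assumes "V $ 0 = 0" "V $ 1 = 1" "P $ 0 = 0" "b1 > 0" "b2 > 0"
    and "hyp3F2_op V P a1 a2 a3 b1 b2 F = 0" "F $ 0 = 0"
  shows "F = 0"
proof (rule ccontr)
  assume "F \<noteq> 0"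
  define m where "m = subdegree F"
  have "F $ m \<noteq> 0"
    unfolding m_def using \<open>F \<noteq> 0\<close> by simp
  then have "m > 0"
    using assms(7) by (cases m) auto
  then have "m * (m + b1 - 1) * (m + b2 - 1) \<noteq> 0"
    using assms(4,5) by simp
  then have "of_real (m * (m + b1 - 1) * (m + b2 - 1)) * F $ m \<noteq> 0"
    using \<open>F $ m \<noteq> 0\<close> by (metis mult_eq_0_iff of_real_eq_0_iff)
  moreover have "\<forall>j<m. F $ j = 0"
    unfolding m_def using nth_less_subdegree_zero by blast
  then have "hyp3F2_op V P a1 a2 a3 b1 b2 F $ m = of_real (m * (m + b1 - 1) * (m + b2 - 1)) * F $ m"
    by (rule hyp3F2_op_nth[OF assms(1-3)])
  ultimately show False
    using assms(6) by (metis fps_zero_nth)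
qed

section \<open>Products of radicals\<close>

lemma fps_binomial_ODE:
  fixes c :: "'a::field_char_0"
  shows "(1 + fps_X) * fps_deriv (fps_binomial c) = fps_const c * fps_binomial c"
  by (simp add: fps_binomial_deriv fps_is_unit_iff)

lemma fps_deriv_fps_binomial_compose:
  fixes W :: "'a::field_char_0 fps"
  assumes "W $ 0 = 0"
  shows "(1 + W) * fps_deriv (fps_binomial c oo W) = fps_const c * fps_deriv W * (fps_binomial c oo W)"
proof -
  have "(1 + W) * fps_deriv (fps_binomial c oo W) = (((1 + fps_X) * fps_deriv (fps_binomial c)) oo W) * fps_deriv W"
    using assms by (simp add: fps_compose_deriv fps_compose_mult_distrib fps_compose_add_distrib)
  also have "\<dots> = fps_const c * fps_deriv W * (fps_binomial c oo W)"
    using assms by (simp add: fps_binomial_ODE fps_compose_mult_distrib)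
  finally show ?thesis .
qed

fun radical_prod :: "int \<Rightarrow> (int list \<times> int) list \<Rightarrow> 'a::{ln, real_normed_field} \<Rightarrow> 'a" where
  "radical_prod d [] z = 1"
| "radical_prod d ((P, k) # ps) z = cl_eval P z powr (of_int k / of_int d) * radical_prod d ps z"

fun radical_prod_fps :: "int \<Rightarrow> (int list \<times> int) list \<Rightarrow> complex fps" where
  "radical_prod_fps d [] = 1"
| "radical_prod_fps d ((P, k) # ps) = (fps_binomial (of_int k / of_int d) oo (cl_fps P - 1)) * radical_prod_fps d ps"

fun cl_prod :: "(int list \<times> int) list \<Rightarrow> int list" where
  "cl_prod [] = [1]"
| "cl_prod ((P, k) # ps) = cl_mult P (cl_prod ps)"

fun radical_log_deriv :: "(int list \<times> int) list \<Rightarrow> int list" where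
  "radical_log_deriv [] = []"
| "radical_log_deriv ((P, k) # ps) =
     cl_add (cl_smult k (cl_mult (cl_deriv P) (cl_prod ps))) (cl_mult P (radical_log_deriv ps))"

lemma radical_prod_fps_nth_0:
  assumes "\<forall>P\<in>fst ` set ps. cl_nth P 0 = 1"
  shows "radical_prod_fps d ps $ 0 = 1"
  using assms by (induction d ps rule: radical_prod_fps.induct) (auto simp: fps_nth_cl_eval)

lemma radical_prod_fps_log_deriv:
  assumes "d \<noteq> 0" "\<forall>P\<in>fst ` set ps. cl_nth P 0 = 1"
  shows "of_int d * cl_fps (cl_prod ps) * fps_deriv (radical_prod_fps d ps)
       = cl_fps (radical_log_deriv ps) * radical_prod_fps d ps"
  using assms(2)
proof (induction ps)
  case (Cons Pk ps)
  obtain P k where Pk [simp]: "Pk = (P, k)"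
    by fastforce
  define W where "W = cl_fps P - 1"
  define B where "B = fps_binomial (of_int k / of_int d) oo W"
  define R where "R = radical_prod_fps d ps"
  have W0: "W $ 0 = 0"
    using Cons.prems unfolding W_def by (simp add: fps_nth_cl_eval)
  have "of_int d * ((1 + W) * fps_deriv B) = of_int d * (fps_const (of_int k / of_int d) * fps_deriv W * B)"
    unfolding B_def by (simp only: fps_deriv_fps_binomial_compose[OF W0])
  also have "\<dots> = of_int k * fps_deriv W * B"
    using assms(1) by (simp flip: fps_of_int fps_const_mult)
  finally have B': "of_int d * ((1 + W) * fps_deriv B) = of_int k * fps_deriv W * B" .
  have R': "of_int d * cl_fps (cl_prod ps) * fps_deriv R = cl_fps (radical_log_deriv ps) * R"
    using Cons unfolding R_def by simp
  have P: "cl_fps P = 1 + W"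
    unfolding W_def by simp
  have prod: "cl_fps (cl_prod (Pk # ps)) = (1 + W) * cl_fps (cl_prod ps)"
    and rad: "radical_prod_fps d (Pk # ps) = B * R"
    by (simp_all add: P B_def R_def flip: W_def)
  have "of_int d * cl_fps (cl_prod (Pk # ps)) * fps_deriv (radical_prod_fps d (Pk # ps))
      = of_int d * ((1 + W) * fps_deriv B) * (cl_fps (cl_prod ps) * R)
        + (1 + W) * B * (of_int d * cl_fps (cl_prod ps) * fps_deriv R)"
    unfolding prod rad by (simp add: algebra_simps)
  also have "\<dots> = cl_fps (radical_log_deriv (Pk # ps)) * radical_prod_fps d (Pk # ps)"
    unfolding B' R' rad by (simp add: P fps_deriv_cl_eval[symmetric] algebra_simps)
  finally show ?case .
qed simp

lemma has_fps_expansion_radical_prod: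
  assumes "\<forall>P\<in>fst ` set ps. cl_nth P 0 = 1"
  shows "(radical_prod d ps :: complex \<Rightarrow> complex) has_fps_expansion radical_prod_fps d ps"
  using assms
proof (induction d ps rule: radical_prod_fps.induct)
  case (1 d)
  have "radical_prod d [] = (\<lambda>_::complex. 1)"
    by (simp add: fun_eq_iff)
  then show ?case
    by simp
next
  case (2 d P k ps)
  let ?c = "of_int k / of_int d :: complex"
  have "(\<lambda>z::complex. cl_eval P z - 1) has_fps_expansion cl_fps P - 1"
    using has_fps_expansion_cl_eval by (intro has_fps_expansion_diff) auto
  then have "((\<lambda>w. (1 + w) powr ?c) \<circ> (\<lambda>z. cl_eval P z - 1)) has_fps_expansion
       (fps_binomial ?c oo (cl_fps P - 1))"
    using "2.prems" by (intro has_fps_expansion_compose has_fps_expansion_binomial_complex)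
      (simp_all add: fps_nth_cl_eval)
  then have "(\<lambda>z. cl_eval P z powr ?c * radical_prod d ps z) has_fps_expansion radical_prod_fps d ((P, k) # ps)"
    using 2 by (auto simp: o_def intro: has_fps_expansion_mult)
  then show ?case
    by simp
qed

lemma radical_prod_of_real:
  assumes "\<forall>P\<in>fst ` set ps. cl_eval P x > 0"
  shows "radical_prod d ps (complex_of_real x) = of_real (radical_prod d ps x)"
  using assms
proof (induction d ps x rule: radical_prod.induct)
  case (2 d P k ps x)
  have "complex_of_real (cl_eval P x) powr (of_int k / of_int d) = of_real (cl_eval P x powr (of_int k / of_int d))"
    using "2.prems" by (simp add: powr_of_real[symmetric])
  then show ?case
    using 2 by (simp add: cl_eval_of_real)
qed simp

lemma eventually_cl_eval_pos:
  assumes "cl_nth P 0 > 0"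
  shows "eventually (\<lambda>x. cl_eval P x > (0::real)) (nhds 0)"
proof -
  have "isCont (cl_eval P :: real \<Rightarrow> real) 0"
    using continuous_cl_eval[of P, where 'a=real] by (simp add: continuous_on_eq_continuous_at)
  then have "(cl_eval P \<longlongrightarrow> cl_eval P 0) (nhds (0::real))"
    by (simp add: isCont_def tendsto_nhds_iff)
  then show ?thesis
    by (rule order_tendstoD(1)) (use assms in \<open>simp add: cl_eval_at_0\<close>)
qed

section \<open>Polynomial certificates\<close>

lemma vderiv_divide_eq_self:
  fixes A Q N D :: "complex fps"
  assumes "Q * (N * D) = A * (fps_deriv N * D - N * fps_deriv D)" "Q $ 0 \<noteq> 0" "D $ 0 \<noteq> 0"
  shows "vderiv (A / Q) (N / D) = N / D"
proof -
  define V where "V = A / Q"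
  define P where "P = N / D"
  have QV: "Q * V = A" and PD: "P * D = N"
    using assms(2,3) by (simp_all add: V_def P_def)
  have dPD: "fps_deriv P * D = fps_deriv N - P * fps_deriv D"
    using arg_cong[OF PD, of fps_deriv] by (simp add: algebra_simps)
  have "Q * D * D * vderiv V P = Q * V * D * (fps_deriv P * D)"
    by (simp add: vderiv_def ac_simps)
  also have "\<dots> = A * (fps_deriv N * D - P * D * fps_deriv D)"
    unfolding QV dPD by (simp add: algebra_simps)
  also have "\<dots> = Q * D * D * P"
    using assms(1) unfolding PD by (simp flip: PD add: ac_simps)
  finally have "Q * D * D * vderiv V P = Q * D * D * P" .
  moreover have "Q * D * D \<noteq> 0"
    using assms(2,3) by (metis fps_mult_nth_0 mult_eq_0_iff fps_zero_nth)
  ultimately show ?thesis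
    unfolding V_def P_def by simp
qed

lemma vderiv_certificate_step:
  fixes V A Q u p p1 Y Z :: "complex fps"
  assumes QV: "Q * V = A" and Y: "u * Q * vderiv V Y = p1 * Y" and Z: "u ^ Suc k * Q ^ Suc b * Z = p * Y"
  shows "u ^ (Suc k + 1) * Q ^ (Suc b + 2) * vderiv V Z
       = (A * (u * Q * fps_deriv p - of_nat (Suc k) * fps_deriv u * Q * p - of_nat (Suc b) * u * fps_deriv Q * p)
          + Q * p * p1) * Y"
proof -
  define U where "U = u ^ Suc k * Q ^ Suc b"
  define c where "c = of_nat (Suc k) * fps_deriv u * Q + of_nat (Suc b) * u * fps_deriv Q"
  have "fps_deriv U = c * u ^ k * Q ^ b"
    unfolding U_def fps_deriv_mult fps_deriv_power c_def by (simp add: fps_of_nat algebra_simps del: of_nat_Suc)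
  then have dZ: "U * fps_deriv Z = fps_deriv p * Y + p * fps_deriv Y - c * u ^ k * Q ^ b * Z"
    using arg_cong[OF Z[folded U_def], of fps_deriv] unfolding fps_deriv_mult by (simp add: algebra_simps)
  have dY: "u * Q * A * fps_deriv Y = Q * p1 * Y"
    using Y unfolding QV[symmetric] vderiv_def by (simp add: ac_simps)
  have "u ^ (Suc k + 1) * Q ^ (Suc b + 2) * vderiv V Z = u * Q * (Q * V) * (U * fps_deriv Z)"
    by (simp add: U_def vderiv_def ac_simps)
  also have "\<dots> = u * Q * A * fps_deriv p * Y + p * (u * Q * A * fps_deriv Y) - A * c * U * Z"
    unfolding dZ QV by (simp add: U_def algebra_simps)
  also have "\<dots> = (A * (u * Q * fps_deriv p - of_nat (Suc k) * fps_deriv u * Q * p - of_nat (Suc b) * u * fps_deriv Q * p)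
          + Q * p * p1) * Y"
    unfolding dY mult.assoc[of _ U] Z[folded U_def] c_def by (simp add: algebra_simps)
  finally show ?thesis .
qed

lemma hyp3F2_op_eq_0_certificate:
  fixes V P N D u Q Y p1 p2 p3 :: "complex fps"
  assumes r1: "u * Q * vderiv V Y = p1 * Y"
    and r2: "u ^ 2 * Q ^ 3 * vderiv V (vderiv V Y) = p2 * Y"
    and r3: "u ^ 3 * Q ^ 5 * vderiv V (vderiv V (vderiv V Y)) = p3 * Y"
    and PD: "P * D = N" and nz: "u ^ 3 * Q ^ 5 * D \<noteq> 0"
    and identity: "D * (p3 + fps_const (of_real (b1 + b2 - 2)) * u * Q ^ 2 * p2
        + fps_const (of_real ((b1 - 1) * (b2 - 1))) * u ^ 2 * Q ^ 4 * p1)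
      = N * (p3 + fps_const (of_real (a1 + a2 + a3)) * u * Q ^ 2 * p2
        + fps_const (of_real (a1 * a2 + a1 * a3 + a2 * a3)) * u ^ 2 * Q ^ 4 * p1
        + fps_const (of_real (a1 * a2 * a3)) * u ^ 3 * Q ^ 5)"
  shows "hyp3F2_op V P a1 a2 a3 b1 b2 Y = 0"
proof -
  let ?D = "vderiv V"
  let ?W = "u ^ 3 * Q ^ 5"
  have h1: "?W * ?D Y = u ^ 2 * Q ^ 4 * p1 * Y"
    using r1 by (simp add: power_numeral_reduce algebra_simps flip: r1)
  have h2: "?W * ?D (?D Y) = u * Q ^ 2 * p2 * Y"
    using r2 by (simp add: power_numeral_reduce algebra_simps flip: r2)
  have "?W * D * hyp3F2_op V P a1 a2 a3 b1 b2 Y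
      = D * (?W * ?D (?D (?D Y)) + fps_const (of_real (b1 + b2 - 2)) * (?W * ?D (?D Y))
          + fps_const (of_real ((b1 - 1) * (b2 - 1))) * (?W * ?D Y))
        - P * D * (?W * ?D (?D (?D Y)) + fps_const (of_real (a1 + a2 + a3)) * (?W * ?D (?D Y))
          + fps_const (of_real (a1 * a2 + a1 * a3 + a2 * a3)) * (?W * ?D Y)
          + fps_const (of_real (a1 * a2 * a3)) * ?W * Y)"
    by (simp add: hyp3F2_op_def algebra_simps)
  also have "\<dots> = 0"
    unfolding h1 h2 r3 PD using arg_cong[OF identity, of "\<lambda>t. t * Y"] by (simp add: algebra_simps)
  finally show ?thesis
    using nz by simp
qed

lemma hyp3F2_op_solution_eq:
  fixes V P Y :: "complex fps"
  assumes "V $ 0 = 0" "V $ 1 = 1" "P $ 0 = 0" "vderiv V P = P" "b1 > 0" "b2 > 0"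
    and "hyp3F2_op V P a1 a2 a3 b1 b2 Y = 0"
  shows "Y = fps_const (Y $ 0) * (hyp3F2_fps a1 a2 a3 b1 b2 oo P)"
proof -
  define F where "F = fps_const (Y $ 0) * (hyp3F2_fps a1 a2 a3 b1 b2 oo P) - Y"
  have "hyp3F2_op V P a1 a2 a3 b1 b2 F = 0"
    unfolding F_def hyp3F2_op_linear hyp3F2_op_fps_compose[OF assms(3,4)]
      hyp3F2_op_hyp3F2_fps[OF assms(5,6)] assms(7) by simp
  moreover have "F $ 0 = 0"
    using assms(3) by (simp add: F_def hyp3F2_fps_def hyp3F2_coeff_def)
  ultimately have "F = 0"
    by (rule hyp3F2_op_eq_0_imp_eq_0[OF assms(1-3,5,6)])
  then show ?thesis
    unfolding F_def by simp
qed

definition cl_log_deriv :: "int \<Rightarrow> int list \<Rightarrow> (int list \<times> int) list \<Rightarrow> int list" where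
  "cl_log_deriv d U ps = cl_add (cl_smult d (cl_mult (cl_deriv U) (cl_prod ps))) (cl_mult U (radical_log_deriv ps))"

(* The factor of Y on the right-hand side of vderiv_certificate_step. *)
definition cl_vderiv_step :: "int list \<Rightarrow> int list \<Rightarrow> int list \<Rightarrow> int list \<Rightarrow> nat \<Rightarrow> nat \<Rightarrow> int list \<Rightarrow> int list" where
  "cl_vderiv_step A Q u p1 k b p =
     cl_add (cl_mult A (cl_diff (cl_diff (cl_mult (cl_mult u Q) (cl_deriv p))
         (cl_smult (int k) (cl_mult (cl_mult (cl_deriv u) Q) p)))
         (cl_smult (int b) (cl_mult (cl_mult u (cl_deriv Q)) p))))
       (cl_mult (cl_mult Q p) p1)"

(* The numerator of the left-hand side minus the right-hand side of the identity in
   hyp3F2_op_eq_0_certificate, scaled by K so that the constants k* = K * (symmetric functions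
   of the parameters) are integers. *)
definition cl_hyp3F2_residual ::
    "int \<Rightarrow> int \<Rightarrow> int \<Rightarrow> int \<Rightarrow> int \<Rightarrow> int \<Rightarrow> int list \<Rightarrow> int list \<Rightarrow> int list \<Rightarrow> int list \<Rightarrow> int list \<Rightarrow> int list \<Rightarrow> int list" where
  "cl_hyp3F2_residual K kb_sum kb_prod ka_sum ka_pairs ka_prod A Q u N D p1 =
     (let p2 = cl_vderiv_step A Q u p1 1 1 p1;
          p3 = cl_vderiv_step A Q u p1 2 3 p2;
          w1 = cl_mult u (cl_pow Q 2);
          w2 = cl_mult (cl_pow u 2) (cl_pow Q 4);
          w3 = cl_mult (cl_pow u 3) (cl_pow Q 5)
      in cl_diff
           (cl_mult D (cl_add (cl_add (cl_smult K p3) (cl_smult kb_sum (cl_mult w1 p2))) (cl_smult kb_prod (cl_mult w2 p1))))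
           (cl_mult N (cl_add (cl_add (cl_add (cl_smult K p3) (cl_smult ka_sum (cl_mult w1 p2)))
              (cl_smult ka_pairs (cl_mult w2 p1))) (cl_smult ka_prod w3))))"

lemma cl_fps_cl_vderiv_step:
  "cl_fps (cl_vderiv_step A Q u p1 k b p)
     = cl_fps A * (cl_fps u * cl_fps Q * fps_deriv (cl_fps p) - of_nat k * fps_deriv (cl_fps u) * cl_fps Q * cl_fps p
         - of_nat b * cl_fps u * fps_deriv (cl_fps Q) * cl_fps p) + cl_fps Q * cl_fps p * cl_fps p1"
  by (simp add: cl_vderiv_step_def fps_deriv_cl_eval)

lemma radical_solution_log_deriv:
  assumes "d \<noteq> 0" "\<forall>P\<in>fst ` set ps. cl_nth P 0 = 1"
  shows "of_int d * cl_fps (cl_mult U (cl_prod ps)) * fps_deriv (cl_fps U * radical_prod_fps d ps)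
       = cl_fps (cl_log_deriv d U ps) * (cl_fps U * radical_prod_fps d ps)"
proof -
  have "of_int d * cl_fps (cl_mult U (cl_prod ps)) * fps_deriv (cl_fps U * radical_prod_fps d ps)
      = of_int d * fps_deriv (cl_fps U) * cl_fps (cl_prod ps) * cl_fps U * radical_prod_fps d ps
        + cl_fps U * cl_fps U * (of_int d * cl_fps (cl_prod ps) * fps_deriv (radical_prod_fps d ps))"
    by (simp add: algebra_simps)
  also have "\<dots> = cl_fps (cl_log_deriv d U ps) * (cl_fps U * radical_prod_fps d ps)"
    unfolding radical_prod_fps_log_deriv[OF assms]
    by (simp add: cl_log_deriv_def fps_deriv_cl_eval algebra_simps)
  finally show ?thesis .
qed

lemma of_int_fps_eq_scaled:
  "real_of_int k = real_of_int K * r \<Longrightarrow> (of_int k :: complex fps) = of_int K * fps_const (of_real r)"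
  by (metis fps_const_mult fps_of_int of_real_mult of_real_of_int_eq)

section \<open>From formal to real identities\<close>

lemma eventually_real_eq_if_same_fps_expansion:
  fixes f g :: "complex \<Rightarrow> complex"
  assumes "f has_fps_expansion F" "g has_fps_expansion F"
  shows "eventually (\<lambda>x::real. f (of_real x) = g (of_real x)) (nhds 0)"
proof -
  have "eventually (\<lambda>z. f z = g z) (nhds 0)"
    using assms unfolding has_fps_expansion_def by (auto elim: eventually_elim2)
  then obtain e where "e > 0" "\<forall>z. dist z 0 < e \<longrightarrow> f z = g z"
    unfolding eventually_nhds_metric by blast
  then show ?thesis
    unfolding eventually_nhds_metric by (intro exI[of _ e]) (simp add: dist_norm)
qed

lemma eventually_abs_cl_eval_divide_less:
  assumes "cl_nth N 0 = 0" "cl_nth D 0 \<noteq> 0" "e > 0"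
  shows "eventually (\<lambda>x. \<bar>cl_eval N x / cl_eval D x\<bar> < (e::real)) (nhds 0)"
proof -
  have "isCont (\<lambda>x. cl_eval N x / cl_eval D x :: real) 0"
    using assms(2) continuous_cl_eval[of _, where 'a=real]
    by (intro continuous_intros) (auto simp: continuous_on_eq_continuous_at cl_eval_at_0)
  then have "((\<lambda>x. \<bar>cl_eval N x / cl_eval D x\<bar>) \<longlongrightarrow> 0) (nhds (0::real))"
    using assms(1) by (auto simp: isCont_def tendsto_nhds_iff cl_eval_at_0 dest: tendsto_rabs)
  then show ?thesis
    using assms(3) by (rule order_tendstoD(2))
qed

lemma has_fps_expansion_eval_fps_compose_cl_fraction:
  assumes "fps_conv_radius F > 0" "cl_nth N 0 = 0" "cl_nth D 0 \<noteq> 0"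
  shows "(\<lambda>z. eval_fps F (cl_eval N z / cl_eval D z)) has_fps_expansion (F oo cl_fps N / cl_fps D)"
proof -
  have "(\<lambda>z. cl_eval N z / cl_eval D z) has_fps_expansion cl_fps N / cl_fps D"
    using assms(3) by (intro has_fps_expansion_divide' has_fps_expansion_cl_eval) (simp add: fps_nth_cl_eval)
  then have "(eval_fps F \<circ> (\<lambda>z. cl_eval N z / cl_eval D z)) has_fps_expansion (F oo cl_fps N / cl_fps D)"
    using assms by (intro has_fps_expansion_compose eval_fps_has_fps_expansion) (auto simp: fps_nth_cl_eval)
  then show ?thesis
    by (simp add: o_def)
qed

(* Y = U * prod P^(k/d) and z = N/D: V = A/Q satisfies V (N/D)' = N/D, the relation
   u Q V Y' = M (cl_log_deriv d U ps) Y follows from vderiv_cert, and ode_cert is the identity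
   of hyp3F2_op_eq_0_certificate. *)
locale hyp3F2_pullback_certificate =
  fixes a1 a2 a3 b1 b2 :: real
    and A Q N D :: "int list"
    and d :: int and U :: "int list" and ps :: "(int list \<times> int) list"
    and u M :: "int list"
    and K kb_sum kb_prod ka_sum ka_pairs ka_prod :: int
  assumes b_pos: "b1 > 0" "b2 > 0"
    and pullback_cert: "cl_is_zero (cl_diff (cl_mult Q (cl_mult N D))
        (cl_mult A (cl_diff (cl_mult (cl_deriv N) D) (cl_mult N (cl_deriv D)))))"
    and pullback_coeffs: "cl_nth A 0 = 0" "cl_nth A 1 = cl_nth Q 0" "cl_nth Q 0 \<noteq> 0"
      "cl_nth N 0 = 0" "cl_nth D 0 \<noteq> 0"
    and radicands: "d \<noteq> 0" "\<forall>P\<in>fst ` set ps. cl_nth P 0 = 1"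
    and vderiv_cert: "cl_nth u 0 \<noteq> 0"
      "cl_is_zero (cl_diff (cl_mult u A) (cl_mult M (cl_smult d (cl_mult U (cl_prod ps)))))"
    and ode_cert: "K \<noteq> 0"
      "cl_is_zero (cl_hyp3F2_residual K kb_sum kb_prod ka_sum ka_pairs ka_prod A Q u N D
         (cl_mult M (cl_log_deriv d U ps)))"
    and scaled_params: "real_of_int kb_sum = real_of_int K * (b1 + b2 - 2)"
      "real_of_int kb_prod = real_of_int K * ((b1 - 1) * (b2 - 1))"
      "real_of_int ka_sum = real_of_int K * (a1 + a2 + a3)"
      "real_of_int ka_pairs = real_of_int K * (a1 * a2 + a1 * a3 + a2 * a3)"
      "real_of_int ka_prod = real_of_int K * (a1 * a2 * a3)"
begin

lemma Q_times_A_div_Q: "cl_fps Q * (cl_fps A / cl_fps Q) = cl_fps A"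
  using pullback_coeffs(3) by (simp add: fps_nth_cl_eval)

lemma vderiv_solution:
  "cl_fps u * cl_fps Q * vderiv (cl_fps A / cl_fps Q) (cl_fps U * radical_prod_fps d ps)
     = cl_fps (cl_mult M (cl_log_deriv d U ps)) * (cl_fps U * radical_prod_fps d ps)"
proof -
  let ?Y = "cl_fps U * radical_prod_fps d ps"
  have uA: "cl_fps u * cl_fps A = cl_fps M * (of_int d * cl_fps (cl_mult U (cl_prod ps)))"
    using cl_eval_eq_0[OF vderiv_cert(2), of "fps_X :: complex fps"] by (simp add: fps_of_int[symmetric])
  have "cl_fps u * cl_fps Q * vderiv (cl_fps A / cl_fps Q) ?Y
      = cl_fps u * (cl_fps Q * (cl_fps A / cl_fps Q)) * fps_deriv ?Y"
    by (simp add: vderiv_def ac_simps)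
  also have "\<dots> = cl_fps u * cl_fps A * fps_deriv ?Y"
    unfolding Q_times_A_div_Q ..
  also have "\<dots> = cl_fps M * (of_int d * cl_fps (cl_mult U (cl_prod ps)) * fps_deriv ?Y)"
    unfolding uA by (simp add: ac_simps)
  also have "\<dots> = cl_fps (cl_mult M (cl_log_deriv d U ps)) * ?Y"
    unfolding radical_solution_log_deriv[OF radicands] by simp
  finally show ?thesis .
qed

lemma residual_identity:
  fixes p1 :: "int list"
  defines "p2 \<equiv> cl_vderiv_step A Q u p1 1 1 p1"
  defines "p3 \<equiv> cl_vderiv_step A Q u p1 2 3 p2"
  assumes "cl_is_zero (cl_hyp3F2_residual K kb_sum kb_prod ka_sum ka_pairs ka_prod A Q u N D p1)"
  shows "cl_fps D * (cl_fps p3 + fps_const (of_real (b1 + b2 - 2)) * cl_fps u * cl_fps Q ^ 2 * cl_fps p2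
        + fps_const (of_real ((b1 - 1) * (b2 - 1))) * cl_fps u ^ 2 * cl_fps Q ^ 4 * cl_fps p1)
      = cl_fps N * (cl_fps p3 + fps_const (of_real (a1 + a2 + a3)) * cl_fps u * cl_fps Q ^ 2 * cl_fps p2
        + fps_const (of_real (a1 * a2 + a1 * a3 + a2 * a3)) * cl_fps u ^ 2 * cl_fps Q ^ 4 * cl_fps p1
        + fps_const (of_real (a1 * a2 * a3)) * cl_fps u ^ 3 * cl_fps Q ^ 5)"
proof -
  have "of_int K * (cl_fps D * (cl_fps p3 + fps_const (of_real (b1 + b2 - 2)) * cl_fps u * cl_fps Q ^ 2 * cl_fps p2
        + fps_const (of_real ((b1 - 1) * (b2 - 1))) * cl_fps u ^ 2 * cl_fps Q ^ 4 * cl_fps p1)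
      - cl_fps N * (cl_fps p3 + fps_const (of_real (a1 + a2 + a3)) * cl_fps u * cl_fps Q ^ 2 * cl_fps p2
        + fps_const (of_real (a1 * a2 + a1 * a3 + a2 * a3)) * cl_fps u ^ 2 * cl_fps Q ^ 4 * cl_fps p1
        + fps_const (of_real (a1 * a2 * a3)) * cl_fps u ^ 3 * cl_fps Q ^ 5)) = 0"
    using cl_eval_eq_0[OF assms(3), of "fps_X :: complex fps"]
    unfolding cl_hyp3F2_residual_def Let_def p2_def[symmetric] p3_def[symmetric]
    by (simp add: of_int_fps_eq_scaled[OF scaled_params(1)] of_int_fps_eq_scaled[OF scaled_params(2)]
        of_int_fps_eq_scaled[OF scaled_params(3)] of_int_fps_eq_scaled[OF scaled_params(4)]
        of_int_fps_eq_scaled[OF scaled_params(5)] algebra_simps)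
  then show ?thesis
    using ode_cert(1) by (simp add: fps_of_int[symmetric])
qed

lemma hyp3F2_op_solution:
  "hyp3F2_op (cl_fps A / cl_fps Q) (cl_fps N / cl_fps D) a1 a2 a3 b1 b2 (cl_fps U * radical_prod_fps d ps) = 0"
proof -
  define V where "V = cl_fps A / cl_fps Q"
  define Y where "Y = cl_fps U * radical_prod_fps d ps"
  define p1 where "p1 = cl_mult M (cl_log_deriv d U ps)"
  define p2 where "p2 = cl_vderiv_step A Q u p1 1 1 p1"
  define p3 where "p3 = cl_vderiv_step A Q u p1 2 3 p2"
  have QV: "cl_fps Q * V = cl_fps A"
    unfolding V_def by (rule Q_times_A_div_Q)
  have r1: "cl_fps u * cl_fps Q * vderiv V Y = cl_fps p1 * Y"
    unfolding V_def Y_def p1_def by (rule vderiv_solution)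
  have r2: "cl_fps u ^ 2 * cl_fps Q ^ 3 * vderiv V (vderiv V Y) = cl_fps p2 * Y"
    using vderiv_certificate_step[OF QV r1, of 0 0 "vderiv V Y" "cl_fps p1"] r1
    by (simp add: p2_def cl_fps_cl_vderiv_step numeral_eq_Suc)
  have r3: "cl_fps u ^ 3 * cl_fps Q ^ 5 * vderiv V (vderiv V (vderiv V Y)) = cl_fps p3 * Y"
    using vderiv_certificate_step[OF QV r1, of 1 2 "vderiv V (vderiv V Y)" "cl_fps p2"] r2
    by (simp add: p3_def cl_fps_cl_vderiv_step numeral_eq_Suc)
  have PD: "cl_fps N / cl_fps D * cl_fps D = cl_fps N"
    using pullback_coeffs(5) by (simp add: fps_nth_cl_eval)
  have "(cl_fps u ^ 3 * cl_fps Q ^ 5 * cl_fps D) $ 0 \<noteq> 0"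
    using pullback_coeffs(3,5) vderiv_cert(1) by (simp add: fps_nth_cl_eval fps_nth_power_0)
  then have "cl_fps u ^ 3 * cl_fps Q ^ 5 * cl_fps D \<noteq> 0"
    by auto
  from hyp3F2_op_eq_0_certificate[OF r1 r2 r3 PD this
      residual_identity[OF ode_cert(2), folded p1_def, folded p2_def, folded p3_def]] show ?thesis
    unfolding V_def Y_def .
qed

theorem fps_eq:
  "cl_fps U * radical_prod_fps d ps
     = fps_const (of_int (cl_nth U 0)) * (hyp3F2_fps a1 a2 a3 b1 b2 oo (cl_fps N / cl_fps D))"
proof -
  define V where "V = cl_fps A / cl_fps Q"
  define P where "P = cl_fps N / cl_fps D"
  have QV: "cl_fps Q * V = cl_fps A"
    unfolding V_def by (rule Q_times_A_div_Q)
  have V0: "V $ 0 = 0"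
    using arg_cong[OF QV, of "\<lambda>F. fps_nth F 0"] pullback_coeffs(1,3) by (simp add: fps_nth_cl_eval)
  have V1: "V $ 1 = 1"
    using arg_cong[OF QV, of "\<lambda>F. fps_nth F 1"] pullback_coeffs(1-3) V0
    by (simp add: fps_nth_cl_eval fps_mult_nth_1)
  have P0: "P $ 0 = 0"
    using pullback_coeffs(4,5) by (simp add: P_def fps_nth_cl_eval)
  have "vderiv V P = P"
    unfolding V_def P_def using pullback_coeffs(3,5) cl_eval_eq_0[OF pullback_cert, of "fps_X :: complex fps"]
    by (intro vderiv_divide_eq_self) (simp_all add: fps_nth_cl_eval fps_deriv_cl_eval)
  then have "cl_fps U * radical_prod_fps d ps
      = fps_const ((cl_fps U * radical_prod_fps d ps) $ 0) * (hyp3F2_fps a1 a2 a3 b1 b2 oo P)"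
    using hyp3F2_op_solution unfolding V_def[symmetric] P_def[symmetric]
    by (intro hyp3F2_op_solution_eq[OF V0 V1 P0 _ b_pos])
  then show ?thesis
    using radical_prod_fps_nth_0[OF radicands(2)] by (simp add: P_def fps_nth_cl_eval)
qed

theorem eventually_eq:
  assumes a: "\<bar>a1\<bar> \<le> 2" "\<bar>a2\<bar> \<le> 2" "\<bar>a3\<bar> \<le> 2" and b: "b1 \<ge> 1/2" "b2 \<ge> 1/2"
  shows "eventually (\<lambda>x. of_int (cl_nth U 0) * hyp3F2 a1 a2 a3 b1 b2 (cl_eval N x / cl_eval D x)
           = cl_eval U x * radical_prod d ps x) (nhds 0)"
proof -
  let ?H = "hyp3F2_fps a1 a2 a3 b1 b2"
  let ?f = "\<lambda>z. of_int (cl_nth U 0) * eval_fps ?H (cl_eval N z / cl_eval D z)"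
  let ?g = "\<lambda>z. cl_eval U z * radical_prod d ps z"
  have radius: "fps_conv_radius ?H \<ge> ereal (1/64)"
    by (rule fps_conv_radius_hyp3F2_fps[OF a b])
  then have "fps_conv_radius ?H > 0"
    by (rule less_le_trans[rotated]) simp
  then have "?f has_fps_expansion cl_fps U * radical_prod_fps d ps"
    unfolding fps_eq using pullback_coeffs(4,5)
    by (intro has_fps_expansion_cmult_left has_fps_expansion_eval_fps_compose_cl_fraction)
  moreover have "?g has_fps_expansion cl_fps U * radical_prod_fps d ps"
    by (intro has_fps_expansion_mult has_fps_expansion_cl_eval has_fps_expansion_radical_prod radicands)
  ultimately have "eventually (\<lambda>x::real. ?f (of_real x) = ?g (of_real x)) (nhds 0)"
    by (rule eventually_real_eq_if_same_fps_expansion)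
  moreover have "eventually (\<lambda>x. \<bar>cl_eval N x / cl_eval D x\<bar> < (1/64::real)) (nhds 0)"
    using pullback_coeffs(4,5) by (rule eventually_abs_cl_eval_divide_less) simp
  moreover have "eventually (\<lambda>x. \<forall>P\<in>fst ` set ps. cl_eval P x > (0::real)) (nhds 0)"
    using radicands(2) by (intro eventually_ball_finite ballI eventually_cl_eval_pos) auto
  ultimately show ?thesis
  proof eventually_elim
    case (elim x)
    define r where "r = cl_eval N x / cl_eval D x"
    have r: "cl_eval N (of_real x) / cl_eval D (of_real x) = (of_real r :: complex)"
      by (simp add: r_def cl_eval_of_real)
    have "ereal \<bar>r\<bar> < ereal (1/64)"
      using elim(2) unfolding r_def by (simp only: less_ereal.simps(1))
    then have "ereal \<bar>r\<bar> < fps_conv_radius ?H"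
      using radius by (rule less_le_trans)
    then have "of_real (of_int (cl_nth U 0) * hyp3F2 a1 a2 a3 b1 b2 r) = ?f (of_real x)"
      unfolding r by (simp add: eval_hyp3F2_fps_of_real)
    also have "\<dots> = of_real (cl_eval U x * radical_prod d ps x)"
      using elim(1,3) by (simp add: cl_eval_of_real radical_prod_of_real)
    finally show ?case
      unfolding r_def by (simp only: of_real_eq_iff)
  qed
qed

end

section \<open>The transformations along Phi3\<close>

definition "F1_coeffs = [1, 5, -8, 1 :: int]"
definition "G0_coeffs = [1, -1, 1 :: int]"
definition "G1_coeffs = [1, -235, 1430, -1695, 270, 229, 1 :: int]"
definition "Phi3_numer = cl_smult 1728 (cl_mult (cl_mult [0, 1] [-1, 1]) (cl_pow F1_coeffs 7))"
definition "Phi3_denom = cl_mult (cl_pow G0_coeffs 3) (cl_pow G1_coeffs 3)"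
definition "V3_numer = cl_mult (cl_mult (cl_mult [0, 1] [-1, 1]) F1_coeffs) (cl_mult G0_coeffs G1_coeffs)"
(* V3_numer / V3_denom = Phi3 / Phi3' in lowest terms *)
definition "V3_denom = [-1, -510, 14631, -80090, 218058, -316290, 253239, -131562, 70998, -37950, 8955, 522, -1 :: int]"

lemma Phi3_pullback_cert:
  "cl_is_zero (cl_diff (cl_mult V3_denom (cl_mult Phi3_numer Phi3_denom))
     (cl_mult V3_numer (cl_diff (cl_mult (cl_deriv Phi3_numer) Phi3_denom) (cl_mult Phi3_numer (cl_deriv Phi3_denom)))))"
  by code_simp

lemma Phi3_pullback_coeffs:
  "cl_nth V3_numer 0 = 0" "cl_nth V3_numer 1 = cl_nth V3_denom 0" "cl_nth V3_denom 0 \<noteq> 0"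
  "cl_nth Phi3_numer 0 = 0" "cl_nth Phi3_denom 0 \<noteq> 0"
  by code_simp+

lemma cl_eval_F1_coeffs: "cl_eval F1_coeffs x = F1 x"
  by (simp add: F1_coeffs_def F1_def algebra_simps power2_eq_square power3_eq_cube)

lemma cl_eval_G0_coeffs: "cl_eval G0_coeffs x = G0 x"
  by (simp add: G0_coeffs_def G0_def algebra_simps power2_eq_square)

lemma cl_eval_G1_coeffs: "cl_eval G1_coeffs x = G1 x"
  by (simp add: G1_coeffs_def G1_def algebra_simps power2_eq_square power3_eq_cube numeral_eq_Suc)

lemma cl_eval_Phi3: "cl_eval Phi3_numer x / cl_eval Phi3_denom x = Phi3 x"
  by (simp add: Phi3_numer_def Phi3_denom_def Phi3_def cl_eval_F1_coeffs cl_eval_G0_coeffs cl_eval_G1_coeffs algebra_simps)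

(* In the certificates below, K = 74088 = 42^3 clears the denominators of the parameters. *)
lemma hyp3F2_Phi3_1:
  "eventually (\<lambda>x. hyp3F2 (-1/14) (11/42) (25/42) (4/7) (5/7) (Phi3 x)
     = (1 - 3*x) * (1 - x) powr (3/7) * G0 x powr (-3/14) * G1 x powr (-3/14)) (nhds 0)"
proof -
  interpret hyp3F2_pullback_certificate "-1/14" "11/42" "25/42" "4/7" "5/7" V3_numer V3_denom Phi3_numer Phi3_denom
      14 "[1, -3]" "[([1, -1], 6), (G0_coeffs, -3), (G1_coeffs, -3)]" "[14, -42]" "[0, -1, -5, 8, -1]" 74088 "-52920" 9072 58212 7014 "-825"
    by unfold_locales (fact Phi3_pullback_cert Phi3_pullback_coeffs | code_simp)+
  show ?thesis
    using eventually_eq by (simp add: cl_eval_Phi3 cl_eval_G0_coeffs cl_eval_G1_coeffs ac_simps)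
qed

lemma hyp3F2_Phi3_2:
  "eventually (\<lambda>x. hyp3F2 (3/14) (23/42) (37/42) (6/7) (9/7) (Phi3 x)
     = (1 - 2*x/3) * (1 - x) powr (-2/7) * F1 x powr (-2) * G0 x powr (9/14) * G1 x powr (9/14)) (nhds 0)"
proof -
  interpret hyp3F2_pullback_certificate "3/14" "23/42" "37/42" "6/7" "9/7" V3_numer V3_denom Phi3_numer Phi3_denom
      14 "[3, -2]" "[([1, -1], -4), (F1_coeffs, -28), (G0_coeffs, 9), (G1_coeffs, 9)]" "[42, -28]" "[0, -1]" 74088 10584 "-3024" 121716 58422 7659
    by unfold_locales (fact Phi3_pullback_cert Phi3_pullback_coeffs | code_simp)+
  show ?thesis
    using eventually_eq by (simp add: cl_eval_Phi3 cl_eval_F1_coeffs cl_eval_G0_coeffs cl_eval_G1_coeffs field_simps)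
qed

lemma hyp3F2_Phi3_3:
  "eventually (\<lambda>x. hyp3F2 (5/14) (29/42) (43/42) (8/7) (10/7) (Phi3 x)
     = (1 + x/2) * (1 - x) powr (-1/7) * F1 x powr (-3) * G0 x powr (15/14) * G1 x powr (15/14)) (nhds 0)"
proof -
  interpret hyp3F2_pullback_certificate "5/14" "29/42" "43/42" "8/7" "10/7" V3_numer V3_denom Phi3_numer Phi3_denom
      14 "[2, 1]" "[([1, -1], -2), (F1_coeffs, -42), (G0_coeffs, 15), (G1_coeffs, 15)]" "[28, 14]" "[0, -1]" 74088 42336 4536 153468 97734 18705
    by unfold_locales (fact Phi3_pullback_cert Phi3_pullback_coeffs | code_simp)+
  show ?thesis
    using eventually_eq by (simp add: cl_eval_Phi3 cl_eval_F1_coeffs cl_eval_G0_coeffs cl_eval_G1_coeffs field_simps)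
qed

theorem mainTheorem8:
  shows "\<exists>e>0. \<forall>x::real. \<bar>x\<bar> < e \<longrightarrow>
    hyp3F2 (-1/14) (11/42) (25/42) (4/7) (5/7) (Phi3 x)
      = (1 - 3*x) * (1 - x) powr (3/7) * G0 x powr (-3/14) * G1 x powr (-3/14)
  \<and> hyp3F2 (3/14) (23/42) (37/42) (6/7) (9/7) (Phi3 x)
      = (1 - 2*x/3) * (1 - x) powr (-2/7) * F1 x powr (-2) * G0 x powr (9/14) * G1 x powr (9/14)
  \<and> hyp3F2 (5/14) (29/42) (43/42) (8/7) (10/7) (Phi3 x)
      = (1 + x/2) * (1 - x) powr (-1/7) * F1 x powr (-3) * G0 x powr (15/14) * G1 x powr (15/14)"
  using eventually_conj[OF hyp3F2_Phi3_1 eventually_conj[OF hyp3F2_Phi3_2 hyp3F2_Phi3_3]]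
  unfolding eventually_nhds_metric dist_real_def diff_zero .

end
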